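(* Let $\mathcal D$ be a distribution on $\mathcal X^k\times\mathbb R$, and let $\mathcal X=\mathcal X_{seen}\sqcup\mathcal X_{uns}$ where $\mathcal X_{seen}$ is the smallest set with $x\in\mathcal X_{seen}^k$ almost surely for $(x,y)\sim\mathcal D$. For any number of SGD steps $t$ and any step sizes $\eta_1,\dots,\eta_t>0$, and any $x_1,x_2\in\mathcal X_{uns}^k$, $$\mathbb E_{\theta^t}[f_{\mathrm{MLP}}(x_1;\theta^t)]=\mathbb E_{\theta^t}[f_{\mathrm{MLP}}(x_2;\theta^t)]$$ (indeed $f_{\mathrm{MLP}}(x_1;\theta^t)$ and $f_{\mathrm{MLP}}(x_2;\theta^t)$ have the same distribution), whenever these expectations exist.
   Context: $\mathcal X$ is a finite token alphabet with $m=|\mathcal X|$. The MLP with depth $L$, width $d$ and differentiable activation $\phi$ has weights $\theta=\{W_1,\dots,W_L,w\}$ with $W_1\in\mathbb R^{d\times km}$, $W_\ell\in\mathbb R^{d\times d}$ ($\ell\ge2$), $w\in\mathbb R^d$, and outputs $f_{\mathrm{MLP}}(x;\theta)=w^Tz_L(x;\theta)$ where $z_0(x)=(e_{x_1},\dots,e_{x_k})\in\mathbb R^{km}$ (concatenated one-hot encodings) and $z_\ell(x;\theta)=\phi(W_\ell z_{\ell-1}(x;\theta))$ elementwise for $\ell\ge1$. One-pass SGD: $\theta^0$ has independent Gaussian entries, i.i.d. within each of $W_1^0,\dots,W_L^0,w^0$; then $\theta^s=\theta^{s-1}-\eta_s\nabla_\theta(f_{\mathrm{MLP}}(x^s;\theta)-y^s)^2|_{\theta=\theta^{s-1}}$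 with fresh independent samples $(x^s,y^s)\sim\mathcal D$. *)

theory Defs
  imports "HOL-Probability.Probability"
begin

text \<open>Token alphabet: the tokens are 0,...,m-1 (so m = card of the alphabet).
  An input x in X^k is a list of length k with entries < m.\<close>

definition seqs :: "nat \<Rightarrow> nat \<Rightarrow> nat list set" where
  "seqs k m = {x. length x = k \<and> set x \<subseteq> {..<m}}"

text \<open>Parameter indices: WI l i j is entry (i,j) of W_l (1 \<le> l \<le> L), VI i is entry i of w.\<close>
datatype pidx = WI nat nat nat | VI nat

definition in_width :: "nat \<Rightarrow> nat \<Rightarrow> nat \<Rightarrow> nat \<Rightarrow> nat" where
  "in_width k m d l = (if l = 1 then k * m else d)"

definition param_idx :: "nat \<Rightarrow> nat \<Rightarrow> nat \<Rightarrow> nat \<Rightarrow> pidx set" where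
  "param_idx k m L d =
     {WI l i j | l i j. 1 \<le> l \<and> l \<le> L \<and> i < d \<and> j < in_width k m d l} \<union> {VI i | i. i < d}"

text \<open>Concatenated one-hot encoding: coordinate p*m + c is 1 iff x_p = c.\<close>
definition onehot :: "nat \<Rightarrow> nat list \<Rightarrow> nat \<Rightarrow> real" where
  "onehot m x j = (if j < length x * m \<and> x ! (j div m) = j mod m then 1 else 0)"

fun zlayer :: "nat \<Rightarrow> nat \<Rightarrow> nat \<Rightarrow> (real \<Rightarrow> real) \<Rightarrow> (pidx \<Rightarrow> real) \<Rightarrow> nat list \<Rightarrow> nat \<Rightarrow> nat \<Rightarrow> real" where
  "zlayer k m d \<phi> \<theta> x 0 = onehot m x"
| "zlayer k m d \<phi> \<theta> x (Suc l) =
     (\<lambda>i. \<phi> (\<Sum>j<in_width k m d (Suc l). \<theta> (WI (Suc l) i j) * zlayer k m d \<phi> \<theta> x l j))"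

definition f_mlp :: "nat \<Rightarrow> nat \<Rightarrow> nat \<Rightarrow> nat \<Rightarrow> (real \<Rightarrow> real) \<Rightarrow> (pidx \<Rightarrow> real) \<Rightarrow> nat list \<Rightarrow> real" where
  "f_mlp k m L d \<phi> \<theta> x = (\<Sum>i<d. \<theta> (VI i) * zlayer k m d \<phi> \<theta> x L i)"

definition sq_loss :: "nat \<Rightarrow> nat \<Rightarrow> nat \<Rightarrow> nat \<Rightarrow> (real \<Rightarrow> real) \<Rightarrow> (pidx \<Rightarrow> real) \<Rightarrow> nat list \<times> real \<Rightarrow> real" where
  "sq_loss k m L d \<phi> \<theta> xy = (f_mlp k m L d \<phi> \<theta> (fst xy) - snd xy)\<^sup>2"

definition loss_grad :: "nat \<Rightarrow> nat \<Rightarrow> nat \<Rightarrow> nat \<Rightarrow> (real \<Rightarrow> real) \<Rightarrow> (pidx \<Rightarrow> real) \<Rightarrow> nat list \<times> real \<Rightarrow> pidx \<Rightarrow> real" where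
  "loss_grad k m L d \<phi> \<theta> xy p = deriv (\<lambda>s. sq_loss k m L d \<phi> (\<theta>(p := s)) xy) (\<theta> p)"

definition sgd_step :: "nat \<Rightarrow> nat \<Rightarrow> nat \<Rightarrow> nat \<Rightarrow> (real \<Rightarrow> real) \<Rightarrow> real \<Rightarrow> (pidx \<Rightarrow> real) \<Rightarrow> nat list \<times> real \<Rightarrow> pidx \<Rightarrow> real" where
  "sgd_step k m L d \<phi> \<eta> \<theta> xy =
     (\<lambda>p. if p \<in> param_idx k m L d then \<theta> p - \<eta> * loss_grad k m L d \<phi> \<theta> xy p else \<theta> p)"

fun sgd :: "nat \<Rightarrow> nat \<Rightarrow> nat \<Rightarrow> nat \<Rightarrow> (real \<Rightarrow> real) \<Rightarrow> (nat \<Rightarrow> real) \<Rightarrow> (pidx \<Rightarrow> real) \<Rightarrow> (nat \<Rightarrow> nat list \<times> real) \<Rightarrow> nat \<Rightarrow> pidx \<Rightarrow> real" where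
  "sgd k m L d \<phi> \<eta> \<theta>0 S 0 = \<theta>0"
| "sgd k m L d \<phi> \<eta> \<theta>0 S (Suc s) = sgd_step k m L d \<phi> (\<eta> (Suc s)) (sgd k m L d \<phi> \<eta> \<theta>0 S s) (S (Suc s))"

definition init_measure :: "nat \<Rightarrow> nat \<Rightarrow> nat \<Rightarrow> nat \<Rightarrow> (nat \<Rightarrow> real) \<Rightarrow> (nat \<Rightarrow> real) \<Rightarrow> (pidx \<Rightarrow> real) measure" where
  "init_measure k m L d \<mu> \<sigma> = PiM (param_idx k m L d)
     (\<lambda>p. case p of WI l i j \<Rightarrow> density lborel (normal_density (\<mu> l) (\<sigma> l))
                  | VI i \<Rightarrow> density lborel (normal_density (\<mu> 0) (\<sigma> 0)))"

definition seen_tokens :: "nat \<Rightarrow> (nat list \<times> real) measure \<Rightarrow> nat set" where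
  "seen_tokens m D = \<Inter> {S. S \<subseteq> {..<m} \<and> (AE xy in D. set (fst xy) \<subseteq> S)}"

definition unseen_tokens :: "nat \<Rightarrow> (nat list \<times> real) measure \<Rightarrow> nat set" where
  "unseen_tokens m D = {..<m} - seen_tokens m D"

end

theory Submission imports Defs begin

text \<open>Fix two inputs a, b of length k made of unseen tokens, and let the token swap exchange
  a!p and b!p at every position p. It fixes every input made of seen tokens, so it leaves the data
  distribution invariant almost surely; on the network it amounts to permuting the columns of W_1,
  which leaves the i.i.d. Gaussian initialisation invariant. The MLP output, its loss gradient and
  hence every SGD step are equivariant under this relabelling, so relabelling the initial
  parameters and swapping all samples is a measure-preserving involution of the underlying
  probability space that turns the trained network's output on b into its output on a.\<close>

definition swap_token :: "nat list \<Rightarrow> nat list \<Rightarrow> nat \<Rightarrow> nat \<Rightarrow> nat" where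
  "swap_token a b p c =
     (if p < length a then (if c = a!p then b!p else if c = b!p then a!p else c) else c)"

definition swap_tokens :: "nat list \<Rightarrow> nat list \<Rightarrow> nat list \<Rightarrow> nat list" where
  "swap_tokens a b x = map (\<lambda>p. swap_token a b p (x!p)) [0..<length x]"

definition swap_sample :: "nat list \<Rightarrow> nat list \<Rightarrow> nat list \<times> real \<Rightarrow> nat list \<times> real" where
  "swap_sample a b = map_prod (swap_tokens a b) id"

definition swap_coord :: "nat \<Rightarrow> nat list \<Rightarrow> nat list \<Rightarrow> nat \<Rightarrow> nat" where
  "swap_coord m a b j = (j div m) * m + swap_token a b (j div m) (j mod m)"

definition swap_param :: "nat \<Rightarrow> nat list \<Rightarrow> nat list \<Rightarrow> pidx \<Rightarrow> pidx" where
  "swap_param m a b q =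
     (case q of WI l i j \<Rightarrow> if l = 1 then WI 1 i (swap_coord m a b j) else WI l i j | VI i \<Rightarrow> VI i)"

lemma swap_token_swap_token [simp]: "swap_token a b p (swap_token a b p c) = c"
  unfolding swap_token_def by auto

lemma swap_token_less:
  assumes "\<forall>p<length a. a!p < m \<and> b!p < m" and "c < m"
  shows "swap_token a b p c < m"
  using assms unfolding swap_token_def by auto

lemma swap_token_id: "c \<notin> set a \<Longrightarrow> c \<notin> set b \<Longrightarrow> length b = length a \<Longrightarrow> swap_token a b p c = c"
  unfolding swap_token_def by auto

lemma length_swap_tokens [simp]: "length (swap_tokens a b x) = length x"
  by (simp add: swap_tokens_def)

lemma nth_swap_tokens [simp]: "p < length x \<Longrightarrow> swap_tokens a b x ! p = swap_token a b p (x!p)"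
  by (simp add: swap_tokens_def)

lemma swap_tokens_swap_tokens [simp]: "swap_tokens a b (swap_tokens a b x) = x"
  by (rule nth_equalityI) auto

lemma swap_tokens_left: "length b = length a \<Longrightarrow> swap_tokens a b a = b"
  by (rule nth_equalityI) (auto simp: swap_token_def)

lemma swap_tokens_id:
  "length b = length a \<Longrightarrow> set x \<inter> (set a \<union> set b) = {} \<Longrightarrow> swap_tokens a b x = x"
  by (rule nth_equalityI) (auto intro!: swap_token_id dest: nth_mem)

lemma swap_sample_swap_sample [simp]: "swap_sample a b (swap_sample a b xy) = xy"
  by (cases xy) (simp add: swap_sample_def)

text \<open>F1 and F2 need not be measurable (the SGD iterates are defined through deriv),
  so this is not an instance of distr_distr.\<close>

lemma distr_eq_by_involution:
  assumes \<Phi>_meas: "\<Phi> \<in> measurable M M" and \<Phi>_pres: "distr M M \<Phi> = M"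
    and \<Phi>_invol: "\<And>\<omega>. \<omega> \<in> space M \<Longrightarrow> \<Phi> (\<Phi> \<omega>) = \<omega>"
    and F: "\<And>\<omega>. \<omega> \<in> space M \<Longrightarrow> F2 \<omega> = F1 (\<Phi> \<omega>)"
  shows "distr M N F1 = distr M N F2"
proof -
  have \<Phi>_space: "\<Phi> \<omega> \<in> space M" if "\<omega> \<in> space M" for \<omega>
    using \<Phi>_meas that by (rule measurable_space)
  have "emeasure M (F1 -` A \<inter> space M) = emeasure M (F2 -` A \<inter> space M)" for A
  proof -
    define X where "X = F1 -` A \<inter> space M"
    have F2_preimage: "F2 -` A \<inter> space M = \<Phi> -` X \<inter> space M"
      using F \<Phi>_space by (auto simp: X_def)
    have X_preimage: "\<Phi> -` (\<Phi> -` X \<inter> space M) \<inter> space M = X"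
      using \<Phi>_invol \<Phi>_space by (auto simp: X_def)
    show ?thesis
    proof (cases "X \<in> sets M")
      case True
      then have "emeasure M (\<Phi> -` X \<inter> space M) = emeasure (distr M M \<Phi>) X"
        using \<Phi>_meas by (simp add: emeasure_distr)
      then show ?thesis
        using F2_preimage \<Phi>_pres by (simp add: X_def)
    next
      case False
      then have "\<Phi> -` X \<inter> space M \<notin> sets M"
        using measurable_sets[OF \<Phi>_meas, of "\<Phi> -` X \<inter> space M"] X_preimage by auto
      then show ?thesis
        using False F2_preimage by (simp add: emeasure_notin_sets X_def)
    qed
  qed
  then show ?thesis
    unfolding distr_def by simp
qed

lemma integral_eq_if_distr_eq:
  fixes f g :: "'a \<Rightarrow> real"
  assumes "distr M borel f = distr M borel g"
    and "f \<in> borel_measurable M" and "g \<in> borel_measurable M"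
  shows "(\<integral>\<omega>. f \<omega> \<partial>M) = (\<integral>\<omega>. g \<omega> \<partial>M)"
  using integral_distr[of f M borel "\<lambda>y. y"] integral_distr[of g M borel "\<lambda>y. y"] assms by simp

lemma distr_eq_self_if_AE_fixed:
  "f \<in> measurable M M \<Longrightarrow> (AE x in M. f x = x) \<Longrightarrow> distr M M f = M"
  using distr_cong_AE[of M M M M f "\<lambda>x. x"] by simp

lemma distr_map_prod_eq_pair_measure:
  assumes "f \<in> measurable M M" "distr M M f = M"
    and "g \<in> measurable N N" "distr N N g = N" "sigma_finite_measure N"
  shows "distr (M \<Otimes>\<^sub>M N) (M \<Otimes>\<^sub>M N) (map_prod f g) = M \<Otimes>\<^sub>M N"
  using pair_measure_distr[of f M M g N N] assms by (simp add: map_prod_def)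

lemma measurable_PiM_permute:
  assumes "\<And>i. i \<in> I \<Longrightarrow> \<pi> i \<in> I" and "\<And>i. i \<in> I \<Longrightarrow> M (\<pi> i) = M i"
  shows "(\<lambda>\<omega>. \<lambda>i\<in>I. \<omega> (\<pi> i)) \<in> measurable (PiM I M) (PiM I M)"
proof (rule measurable_restrict)
  fix i assume "i \<in> I"
  then show "(\<lambda>\<omega>. \<omega> (\<pi> i)) \<in> measurable (PiM I M) (M i)"
    using measurable_component_singleton[of "\<pi> i" I M] assms by simp
qed

lemma distr_PiM_permute:
  assumes "\<And>i. i \<in> I \<Longrightarrow> prob_space (M i)"
    and "inj_on \<pi> I" and "\<And>i. i \<in> I \<Longrightarrow> \<pi> i \<in> I" and "\<And>i. i \<in> I \<Longrightarrow> M (\<pi> i) = M i"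
  shows "distr (PiM I M) (PiM I M) (\<lambda>\<omega>. \<lambda>i\<in>I. \<omega> (\<pi> i)) = PiM I M"
proof -
  have "PiM I (\<lambda>i. M (\<pi> i)) = PiM I M"
    using assms(4) by (rule PiM_cong[OF refl])
  then show ?thesis
    using distr_PiM_reindex[of I M \<pi> I] assms by auto
qed

lemma AE_tokens_seen: "AE xy in D. set (fst xy) \<subseteq> seen_tokens m D"
proof -
  let ?Seen = "{S. S \<subseteq> {..<m} \<and> (AE xy in D. set (fst xy) \<subseteq> S)}"
  have "finite ?Seen"
    by (rule finite_subset[of _ "Pow {..<m}"]) auto
  then have "AE xy in D. \<forall>S\<in>?Seen. set (fst xy) \<subseteq> S"
    by (rule AE_finite_allI) auto
  then show ?thesis
    unfolding seen_tokens_def by (rule AE_mp) auto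
qed

definition init_factor :: "(nat \<Rightarrow> real) \<Rightarrow> (nat \<Rightarrow> real) \<Rightarrow> pidx \<Rightarrow> real measure" where
  "init_factor \<mu> \<sigma> p = (case p of WI l i j \<Rightarrow> density lborel (normal_density (\<mu> l) (\<sigma> l))
                                | VI i \<Rightarrow> density lborel (normal_density (\<mu> 0) (\<sigma> 0)))"

lemma init_measure_eq_PiM: "init_measure k m L d \<mu> \<sigma> = PiM (param_idx k m L d) (init_factor \<mu> \<sigma>)"
  unfolding init_measure_def init_factor_def ..

lemma prob_space_init_factor: "(\<And>l. \<sigma> l > 0) \<Longrightarrow> prob_space (init_factor \<mu> \<sigma> q)"
  by (cases q) (auto simp: init_factor_def prob_space_normal_density)

lemma init_factor_swap_param: "init_factor \<mu> \<sigma> (swap_param m a b q) = init_factor \<mu> \<sigma> q"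
  by (cases q) (auto simp: init_factor_def swap_param_def)

definition trained_mlp ::
    "nat \<Rightarrow> nat \<Rightarrow> nat \<Rightarrow> nat \<Rightarrow> (real \<Rightarrow> real) \<Rightarrow> (nat \<Rightarrow> real) \<Rightarrow> nat \<Rightarrow> nat list
     \<Rightarrow> (pidx \<Rightarrow> real) \<times> (nat \<Rightarrow> nat list \<times> real) \<Rightarrow> real" where
  "trained_mlp k m L d \<phi> \<eta> t x \<omega> = f_mlp k m L d \<phi> (sgd k m L d \<phi> \<eta> (fst \<omega>) (snd \<omega>) t) x"

context
  fixes m :: nat and a b :: "nat list"
  assumes m_pos: "0 < m" and tokens_less: "\<forall>p<length a. a!p < m \<and> b!p < m"
begin

lemma swap_coord_div [simp]: "swap_coord m a b j div m = j div m"
  using swap_token_less[OF tokens_less, of "j mod m" "j div m"] m_pos by (simp add: swap_coord_def)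

lemma swap_coord_mod [simp]: "swap_coord m a b j mod m = swap_token a b (j div m) (j mod m)"
  using swap_token_less[OF tokens_less, of "j mod m" "j div m"] m_pos by (simp add: swap_coord_def)

lemma swap_coord_swap_coord [simp]: "swap_coord m a b (swap_coord m a b j) = j"
  by (subst swap_coord_def) simp

lemma swap_coord_less_iff: "swap_coord m a b j < n * m \<longleftrightarrow> j < n * m"
  using m_pos by (metis swap_coord_div less_mult_imp_div_less mult.commute div_less_iff_less_mult)

lemma onehot_swap_coord: "onehot m x (swap_coord m a b j) = onehot m (swap_tokens a b x) j"
proof -
  have "x ! (j div m) = swap_token a b (j div m) (j mod m)
        \<longleftrightarrow> swap_token a b (j div m) (x ! (j div m)) = j mod m"
    by (metis swap_token_swap_token)
  moreover have "j < length x * m \<Longrightarrow> j div m < length x"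
    using m_pos by (simp add: div_less_iff_less_mult)
  ultimately show ?thesis
    unfolding onehot_def by (auto simp: swap_coord_less_iff)
qed

lemma swap_param_swap_param [simp]: "swap_param m a b (swap_param m a b q) = q"
  by (cases q) (auto simp: swap_param_def)

lemma swap_param_in_param_idx_iff:
  "swap_param m a b q \<in> param_idx k m L d \<longleftrightarrow> q \<in> param_idx k m L d"
  by (cases q) (auto simp: swap_param_def param_idx_def in_width_def swap_coord_less_iff)

lemma zlayer_swap_param:
  "zlayer k m d \<phi> (\<theta> \<circ> swap_param m a b) x (Suc l) = zlayer k m d \<phi> \<theta> (swap_tokens a b x) (Suc l)"
proof (induction l)
  case 0
  have "(\<Sum>j<k*m. \<theta> (WI 1 i (swap_coord m a b j)) * onehot m x j)
      = (\<Sum>j<k*m. \<theta> (WI 1 i j) * onehot m (swap_tokens a b x) j)" for i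
    by (rule sum.reindex_bij_witness[where i="swap_coord m a b" and j="swap_coord m a b"])
       (auto simp: swap_coord_less_iff onehot_swap_coord[symmetric])
  then show ?case
    by (simp add: in_width_def swap_param_def)
next
  case (Suc l)
  show ?case
    by (simp only: zlayer.simps(2)[of _ _ _ _ _ _ "Suc l"] Suc) (simp add: swap_param_def)
qed

lemma f_mlp_swap_param:
  "1 \<le> L \<Longrightarrow> f_mlp k m L d \<phi> (\<theta> \<circ> swap_param m a b) x = f_mlp k m L d \<phi> \<theta> (swap_tokens a b x)"
  using zlayer_swap_param[of k d \<phi> \<theta> x "L - 1"] by (simp add: f_mlp_def swap_param_def)

lemma fun_upd_comp_swap_param:
  "(\<theta> \<circ> swap_param m a b)(q := s) = \<theta>(swap_param m a b q := s) \<circ> swap_param m a b"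
  by (rule ext) (auto simp: fun_upd_def, metis swap_param_swap_param)

lemma sgd_step_swap_param:
  "1 \<le> L \<Longrightarrow> sgd_step k m L d \<phi> \<eta> (\<theta> \<circ> swap_param m a b) xy
     = sgd_step k m L d \<phi> \<eta> \<theta> (swap_sample a b xy) \<circ> swap_param m a b"
  by (rule ext) (simp add: sgd_step_def swap_param_in_param_idx_iff loss_grad_def sq_loss_def
      fun_upd_comp_swap_param f_mlp_swap_param swap_sample_def split_beta)

lemma sgd_swap_param:
  "1 \<le> L \<Longrightarrow> (\<And>s. s \<in> {1..n} \<Longrightarrow> S' s = swap_sample a b (S s)) \<Longrightarrow>
   sgd k m L d \<phi> \<eta> (\<theta>0 \<circ> swap_param m a b) S' n = sgd k m L d \<phi> \<eta> \<theta>0 S n \<circ> swap_param m a b"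
  by (induction n) (auto simp: sgd_step_swap_param)

lemma swap_tokens_in_seqs: "x \<in> seqs k m \<Longrightarrow> swap_tokens a b x \<in> seqs k m"
  unfolding seqs_def using swap_token_less[OF tokens_less]
  by (auto simp: in_set_conv_nth subset_iff)

lemma measurable_swap_sample:
  assumes "sets D = sets (count_space (seqs k m) \<Otimes>\<^sub>M borel)"
  shows "swap_sample a b \<in> measurable D D"
proof -
  have "swap_tokens a b \<in> measurable (count_space (seqs k m)) (count_space (seqs k m))"
    using swap_tokens_in_seqs by (auto simp: measurable_count_space_eq1)
  then have "swap_sample a b \<in> measurable (count_space (seqs k m) \<Otimes>\<^sub>M borel) (count_space (seqs k m) \<Otimes>\<^sub>M borel)"
    unfolding swap_sample_def map_prod_def id_def by measurable
  then show ?thesis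
    using measurable_cong_sets[OF assms assms] by simp
qed

lemma distr_swap_sample:
  assumes "sets D = sets (count_space (seqs k m) \<Otimes>\<^sub>M borel)" and "length b = length a"
    and "set a \<inter> seen_tokens m D = {}" and "set b \<inter> seen_tokens m D = {}"
  shows "distr D D (swap_sample a b) = D"
proof (rule distr_eq_self_if_AE_fixed)
  show "swap_sample a b \<in> measurable D D"
    using assms(1) by (rule measurable_swap_sample)
  show "AE xy in D. swap_sample a b xy = xy"
    using AE_tokens_seen[where D=D and m=m]
    by (rule AE_mp) (use assms(2-4) in \<open>fastforce simp: swap_sample_def intro!: AE_I2 swap_tokens_id\<close>)
qed

lemma swap_params_preserves_init_measure:
  fixes k L d :: nat and \<mu> \<sigma> :: "nat \<Rightarrow> real"
  assumes "\<And>l. \<sigma> l > 0"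
  shows "(\<lambda>\<theta>. \<lambda>q\<in>param_idx k m L d. \<theta> (swap_param m a b q))
           \<in> measurable (init_measure k m L d \<mu> \<sigma>) (init_measure k m L d \<mu> \<sigma>)"
    and "distr (init_measure k m L d \<mu> \<sigma>) (init_measure k m L d \<mu> \<sigma>)
           (\<lambda>\<theta>. \<lambda>q\<in>param_idx k m L d. \<theta> (swap_param m a b q)) = init_measure k m L d \<mu> \<sigma>"
  unfolding init_measure_eq_PiM
  subgoal
    by (rule measurable_PiM_permute) (simp_all add: swap_param_in_param_idx_iff init_factor_swap_param)
  subgoal
    by (rule distr_PiM_permute)
       (simp_all add: prob_space_init_factor[OF assms] swap_param_in_param_idx_iff
          init_factor_swap_param inj_on_def, metis swap_param_swap_param)
  done

lemma swap_samples_preserves_PiM: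
  assumes "prob_space D" and "sets D = sets (count_space (seqs k m) \<Otimes>\<^sub>M borel)"
    and "length b = length a"
    and "set a \<inter> seen_tokens m D = {}" and "set b \<inter> seen_tokens m D = {}"
  shows "compose I (swap_sample a b) \<in> measurable (PiM I (\<lambda>_. D)) (PiM I (\<lambda>_. D))"
    and "finite I \<Longrightarrow> distr (PiM I (\<lambda>_. D)) (PiM I (\<lambda>_. D)) (compose I (swap_sample a b)) = PiM I (\<lambda>_. D)"
proof -
  note meas = measurable_swap_sample[OF assms(2)]
  show "compose I (swap_sample a b) \<in> measurable (PiM I (\<lambda>_. D)) (PiM I (\<lambda>_. D))"
    unfolding compose_def by (rule measurable_restrict) (use meas in auto)
  show "finite I \<Longrightarrow> distr (PiM I (\<lambda>_. D)) (PiM I (\<lambda>_. D)) (compose I (swap_sample a b)) = PiM I (\<lambda>_. D)"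
    by (subst distr_PiM_finite_prob_space'[OF _ _ _ meas])
       (simp_all add: assms(1) distr_swap_sample[OF assms(2-5)])
qed

lemma distr_trained_mlp_swap_tokens:
  fixes D :: "(nat list \<times> real) measure"
  assumes L: "1 \<le> L" and \<sigma>_pos: "\<And>l. \<sigma> l > 0" and D: "prob_space D"
    and sets_D: "sets D = sets (count_space (seqs k m) \<Otimes>\<^sub>M borel)"
    and lengths: "length b = length a"
    and a_unseen: "set a \<inter> seen_tokens m D = {}" and b_unseen: "set b \<inter> seen_tokens m D = {}"
  shows "distr (init_measure k m L d \<mu> \<sigma> \<Otimes>\<^sub>M PiM {1..t} (\<lambda>_. D)) borel (trained_mlp k m L d \<phi> \<eta> t x)
       = distr (init_measure k m L d \<mu> \<sigma> \<Otimes>\<^sub>M PiM {1..t} (\<lambda>_. D)) borel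
           (trained_mlp k m L d \<phi> \<eta> t (swap_tokens a b x))"
proof -
  define A where "A = init_measure k m L d \<mu> \<sigma>"
  define B where "B = PiM {1..t} (\<lambda>_. D)"
  define f where "f = (\<lambda>\<theta> :: pidx \<Rightarrow> real. \<lambda>q\<in>param_idx k m L d. \<theta> (swap_param m a b q))"
  define g where "g = compose {1..t} (swap_sample a b)"
  have f: "f \<in> measurable A A" "distr A A f = A"
    unfolding A_def f_def using swap_params_preserves_init_measure[where \<sigma>=\<sigma>, OF \<sigma>_pos] by blast+
  have g: "g \<in> measurable B B" "distr B B g = B"
    using swap_samples_preserves_PiM[OF D sets_D lengths a_unseen b_unseen] unfolding B_def g_def by auto
  interpret B: prob_space B
    unfolding B_def using D by (rule prob_space_PiM)
  have \<Phi>_meas: "map_prod f g \<in> measurable (A \<Otimes>\<^sub>M B) (A \<Otimes>\<^sub>M B)"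
    using f(1) g(1) unfolding map_prod_def by measurable
  have \<Phi>_pres: "distr (A \<Otimes>\<^sub>M B) (A \<Otimes>\<^sub>M B) (map_prod f g) = A \<Otimes>\<^sub>M B"
    using f g B.sigma_finite_measure by (intro distr_map_prod_eq_pair_measure) auto
  have f_eq: "f \<theta> = \<theta> \<circ> swap_param m a b" if "\<theta> \<in> space A" for \<theta>
  proof
    fix q
    have "\<theta> \<in> extensional (param_idx k m L d)"
      using that by (simp add: A_def init_measure_eq_PiM space_PiM PiE_def)
    then show "f \<theta> q = (\<theta> \<circ> swap_param m a b) q"
      by (cases "q \<in> param_idx k m L d") (auto simp: f_def extensional_def swap_param_in_param_idx_iff)
  qed
  have f_invol: "f (f \<theta>) = \<theta>" if "\<theta> \<in> space A" for \<theta>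
    using f_eq[OF measurable_space[OF f(1) that]] f_eq[OF that] by (simp add: comp_def)
  have g_invol: "g (g S) = S" if "S \<in> space B" for S
    using that by (auto simp: g_def B_def compose_def fun_eq_iff space_PiM PiE_def extensional_def)
  show ?thesis
    unfolding A_def[symmetric] B_def[symmetric]
  proof (rule distr_eq_by_involution[OF \<Phi>_meas \<Phi>_pres])
    fix \<omega> assume "\<omega> \<in> space (A \<Otimes>\<^sub>M B)"
    then obtain \<theta> S where \<omega>: "\<omega> = (\<theta>, S)" and \<theta>: "\<theta> \<in> space A" and S: "S \<in> space B"
      by (cases \<omega>) (auto simp: space_pair_measure)
    show "map_prod f g (map_prod f g \<omega>) = \<omega>"
      by (simp add: \<omega> f_invol[OF \<theta>] g_invol[OF S])
    have "sgd k m L d \<phi> \<eta> (\<theta> \<circ> swap_param m a b) (g S) t = sgd k m L d \<phi> \<eta> \<theta> S t \<circ> swap_param m a b"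
      by (rule sgd_swap_param[OF L]) (simp add: g_def compose_def)
    then show "trained_mlp k m L d \<phi> \<eta> t (swap_tokens a b x) \<omega>
             = trained_mlp k m L d \<phi> \<eta> t x (map_prod f g \<omega>)"
      by (simp add: trained_mlp_def \<omega> f_eq[OF \<theta>] f_mlp_swap_param[OF L])
  qed
qed

end

theorem mainTheorem15:
  fixes k m L d t :: nat and \<phi> :: "real \<Rightarrow> real"
    and \<mu> \<sigma> :: "nat \<Rightarrow> real" and \<eta> :: "nat \<Rightarrow> real"
    and D :: "(nat list \<times> real) measure" and x1 x2 :: "nat list"
  assumes "1 \<le> L"
    and "\<And>u. \<phi> differentiable (at u)"
    and "\<And>l. \<sigma> l > 0"
    and "prob_space D"
    and "sets D = sets (count_space (seqs k m) \<Otimes>\<^sub>M borel)"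
    and "\<And>s. s \<in> {1..t} \<Longrightarrow> \<eta> s > 0"
    and "length x1 = k" and "set x1 \<subseteq> unseen_tokens m D"
    and "length x2 = k" and "set x2 \<subseteq> unseen_tokens m D"
  shows "let \<Omega> = init_measure k m L d \<mu> \<sigma> \<Otimes>\<^sub>M PiM {1..t} (\<lambda>_. D);
             F = (\<lambda>x \<omega>. f_mlp k m L d \<phi> (sgd k m L d \<phi> \<eta> (fst \<omega>) (snd \<omega>) t) x)
         in distr \<Omega> borel (F x1) = distr \<Omega> borel (F x2)
            \<and> (integrable \<Omega> (F x1) \<and> integrable \<Omega> (F x2)
                 \<longrightarrow> (\<integral>\<omega>. F x1 \<omega> \<partial>\<Omega>) = (\<integral>\<omega>. F x2 \<omega> \<partial>\<Omega>))"
proof -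
  define \<Omega> where "\<Omega> = init_measure k m L d \<mu> \<sigma> \<Otimes>\<^sub>M PiM {1..t} (\<lambda>_. D)"
  have F: "(\<lambda>x \<omega>. f_mlp k m L d \<phi> (sgd k m L d \<phi> \<eta> (fst \<omega>) (snd \<omega>) t) x) = trained_mlp k m L d \<phi> \<eta> t"
    by (simp add: trained_mlp_def fun_eq_iff)
  have "distr \<Omega> borel (trained_mlp k m L d \<phi> \<eta> t x1) = distr \<Omega> borel (trained_mlp k m L d \<phi> \<eta> t x2)"
  proof (cases "k = 0")
    case True
    then show ?thesis using assms(7,9) by simp
  next
    case False
    have unseen_less: "unseen_tokens m D \<subseteq> {..<m}"
      by (auto simp: unseen_tokens_def)
    then have m_pos: "0 < m"
      using False assms(7,8) nth_mem[of 0 x1] by fastforce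
    have tokens_less: "\<forall>p<length x1. x1!p < m \<and> x2!p < m"
      using assms(7-10) unseen_less nth_mem by (metis lessThan_iff subset_iff)
    have "set x1 \<inter> seen_tokens m D = {}" "set x2 \<inter> seen_tokens m D = {}"
      using assms(8,10) by (auto simp: unseen_tokens_def)
    from distr_trained_mlp_swap_tokens[OF m_pos tokens_less assms(1,3-5) _ this, where x=x1]
    show ?thesis
      using assms(7,9) by (simp add: \<Omega>_def swap_tokens_left)
  qed
  then show ?thesis
    unfolding Let_def F \<Omega>_def[symmetric] by (auto intro: integral_eq_if_distr_eq)
qed

end
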